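(* Let $A$ be an $m$-dimensional permutation array of size $n_1\times\cdots\times n_m$, index set $\Lambda=[n_1]\times\cdots\times[n_m]$, and order $n$. If $|\mathcal{H}_A|-|H_\Lambda|<n-1$, then there is an $n_1\times\cdots\times n_m$ window in the periodic extension of $A$ which has a repeated difference vector.
   Context: For $n\in\mathbb{N}$, $[n]=\{1,\dots,n\}$; $m\ge2$, all $n_i\ge2$. A binary array $A:\Lambda\to\{0,1\}$ is an $m$-dimensional permutation array if there exist $k$ with $1\le k<m$ and a bijection $\varphi:[n_1]\times\cdots\times[n_k]\to[n_{k+1}]\times\cdots\times[n_m]$ such that $A(a_1,\dots,a_m)=1$ iff $\varphi(a_1,\dots,a_k)=(a_{k+1},\dots,a_m)$; points with value 1 are dots; the order is $n=n_1\cdots n_k=n_{k+1}\cdots n_m$. The periodic extension $\mathbb{A}:\mathbb{Z}^m\to\{0,1\}$ is $\mathbb{A}(a_1,\dots,a_m)=A(a_1',\dots,a_m')$ with $a_i'\in[n_i]$, $a_i'\equiv a_i\pmod{n_i}$; an $n_1\times\cdots\times n_m$ window is the restriction of $\mathbb{A}$ to a box $\prod_i\{k_i,\dots,k_i+n_i-1\}$, $k_i\in\mathbb{Z}$. The difference vector from dot $(a_i)$ to a distinct dot $(w_i)$ is $\langle w_i-a_i\rangle_i\in\mathbb{Z}^m$, the toroidal vector is $\langle (w_i-a_i)\bmod n_i\rangle_i$; a window has a repeated difference vector if two distinct ordered pairs of distinct dots in it have the same difference vector. $\mathcal{H}_A$ is the multiset (counted with multiplicity over ordered pairs of distinct dots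 of $A$) of toroidal vectors $\langle h_1,\dots,h_m\rangle$ of $A$ with $h_i=n_i/2$ for some $i$. With $Z_1=\mathbb{Z}_{n_1}\times\cdots\times\mathbb{Z}_{n_k}$, $Z_2=\mathbb{Z}_{n_{k+1}}\times\cdots\times\mathbb{Z}_{n_m}$, $T_\Lambda=(Z_1\times Z_2)\setminus((Z_1\times\{0\})\cup(\{0\}\times Z_2))$ and $H_\Lambda=\{\langle h_1,\dots,h_m\rangle\in T_\Lambda: h_i=n_i/2\text{ for some }i\in[m]\}$ (a set). *)

theory Defs
  imports Main "HOL-Library.Multiset"
begin

text \<open>Points of Z^m are represented as int lists of length m; the size vector
(n_1,...,n_m) is a nat list ns with m = length ns.  Coordinate i of the paper
is list position i-1.\<close>

definition box :: "nat list \<Rightarrow> int list set" where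
  "box ns = {a. length a = length ns \<and> (\<forall>i<length ns. 1 \<le> a!i \<and> a!i \<le> int (ns!i))}"

definition is_perm_array_wrt ::
  "nat list \<Rightarrow> nat \<Rightarrow> (int list \<Rightarrow> int list) \<Rightarrow> (int list \<Rightarrow> nat) \<Rightarrow> bool" where
  "is_perm_array_wrt ns k \<phi> A \<longleftrightarrow>
     1 \<le> k \<and> k < length ns \<and>
     bij_betw \<phi> (box (take k ns)) (box (drop k ns)) \<and>
     (\<forall>a\<in>box ns. A a \<in> {0,1} \<and> (A a = 1 \<longleftrightarrow> \<phi> (take k a) = drop k a))"

definition dots :: "nat list \<Rightarrow> (int list \<Rightarrow> nat) \<Rightarrow> int list set" where
  "dots ns A = {a \<in> box ns. A a = 1}"

definition per_ext :: "nat list \<Rightarrow> (int list \<Rightarrow> nat) \<Rightarrow> int list \<Rightarrow> nat" where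
  "per_ext ns A a = A (map (\<lambda>(x, n). (x - 1) mod int n + 1) (zip a ns))"

definition window_box :: "nat list \<Rightarrow> int list \<Rightarrow> int list set" where
  "window_box ns c = {a. length a = length ns \<and>
      (\<forall>i<length ns. c!i \<le> a!i \<and> a!i \<le> c!i + int (ns!i) - 1)}"

definition diff_vec :: "int list \<Rightarrow> int list \<Rightarrow> int list" where
  "diff_vec a w = map (\<lambda>(x, y). y - x) (zip a w)"

definition toroidal_vec :: "nat list \<Rightarrow> int list \<Rightarrow> int list \<Rightarrow> int list" where
  "toroidal_vec ns a w = map (\<lambda>((x, y), n). (y - x) mod int n) (zip (zip a w) ns)"

definition window_has_repeated_diff ::
  "nat list \<Rightarrow> (int list \<Rightarrow> nat) \<Rightarrow> int list \<Rightarrow> bool" where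
  "window_has_repeated_diff ns A c \<longleftrightarrow>
     (let D = {a \<in> window_box ns c. per_ext ns A a = 1} in
      \<exists>p q p' q'. p \<in> D \<and> q \<in> D \<and> p' \<in> D \<and> q' \<in> D \<and> p \<noteq> q \<and> p' \<noteq> q' \<and>
        (p, q) \<noteq> (p', q') \<and> diff_vec p q = diff_vec p' q')"

definition has_half_coord :: "nat list \<Rightarrow> int list \<Rightarrow> bool" where
  "has_half_coord ns h \<longleftrightarrow> (\<exists>i<length ns. 2 * h!i = int (ns!i))"

definition H_A :: "nat list \<Rightarrow> (int list \<Rightarrow> nat) \<Rightarrow> int list multiset" where
  "H_A ns A = image_mset (\<lambda>(a, w). toroidal_vec ns a w)
     (mset_set {(a, w). a \<in> dots ns A \<and> w \<in> dots ns A \<and> a \<noteq> w \<and>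
                        has_half_coord ns (toroidal_vec ns a w)})"

text \<open>Z_1 x Z_2 as vectors with 0 \<le> h_i < n_i; T_Lambda and H_Lambda for split k.\<close>
definition Zvecs :: "nat list \<Rightarrow> int list set" where
  "Zvecs ns = {h. length h = length ns \<and> (\<forall>i<length ns. 0 \<le> h!i \<and> h!i < int (ns!i))}"

definition T_Lambda :: "nat list \<Rightarrow> nat \<Rightarrow> int list set" where
  "T_Lambda ns k = {h \<in> Zvecs ns. \<not> (\<forall>i. k \<le> i \<and> i < length ns \<longrightarrow> h!i = 0)
                                 \<and> \<not> (\<forall>i<k. h!i = 0)}"

definition H_Lambda :: "nat list \<Rightarrow> nat \<Rightarrow> int list set" where
  "H_Lambda ns k = {h \<in> T_Lambda ns k. has_half_coord ns h}"

end

theory Submission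
  imports Defs
begin

text \<open>Each ordered pair of distinct dots has its toroidal vector in \<open>T\<^sub>\<Lambda>\<close>, because the
bijection \<open>\<phi>\<close> forces two distinct dots to differ both in the first \<open>k\<close> and in the last
\<open>m - k\<close> coordinates.  If two such pairs have the same toroidal vector and no coordinate of it
equals \<open>n\<^sub>i/2\<close>, then coordinatewise one can place the window so that the two pairs are cut
by its boundary in the same way; their lifts to that window then have equal difference vectors.
Hence, if no window has a repeated difference vector, the toroidal vector is injective on the
\<open>n(n - 1) - |\<H>\<^sub>A|\<close> pairs outside \<open>\<H>\<^sub>A\<close>, with values in \<open>T\<^sub>\<Lambda> - H\<^sub>\<Lambda>\<close>, and
\<open>|T\<^sub>\<Lambda>| \<le> (n - 1)\<^sup>2\<close> yields \<open>|\<H>\<^sub>A| - |H\<^sub>\<Lambda>| \<ge> n - 1\<close>.\<close>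

lemma card_list_all2:
  assumes "\<And>n. finite {x. R x n}"
  shows "finite {a. list_all2 R a ns} \<and>
         card {a. list_all2 R a ns} = prod_list (map (\<lambda>n. card {x. R x n}) ns)"
proof (induction ns)
  case Nil
  have "{a. list_all2 R a []} = {[]}" by auto
  then show ?case by simp
next
  case (Cons n ns)
  have split: "{a. list_all2 R a (n # ns)} = (\<lambda>(x, xs). x # xs) ` ({x. R x n} \<times> {a. list_all2 R a ns})"
    by (auto simp: list_all2_Cons2)
  have "inj_on (\<lambda>(x, xs). x # xs) ({x. R x n} \<times> {a. list_all2 R a ns})"
    by (auto simp: inj_on_def)
  then show ?case
    unfolding split using Cons assms[of n] by (simp add: card_image card_cartesian_product)
qed

lemma box_eq_list_all2: "box ns = {a. list_all2 (\<lambda>x n. 1 \<le> x \<and> x \<le> int n) a ns}"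
  by (auto simp: box_def list_all2_conv_all_nth)

lemma Zvecs_eq_list_all2: "Zvecs ns = {a. list_all2 (\<lambda>x n. 0 \<le> x \<and> x < int n) a ns}"
  by (auto simp: Zvecs_def list_all2_conv_all_nth)

lemma finite_box: "finite (box ns)" and card_box: "card (box ns) = prod_list ns"
proof -
  have "{x. 1 \<le> x \<and> x \<le> int n} = {1..int n}" for n by auto
  then show "finite (box ns)" "card (box ns) = prod_list ns"
    using card_list_all2[of "\<lambda>x n. 1 \<le> x \<and> x \<le> int n" ns] by (simp_all add: box_eq_list_all2)
qed

lemma finite_Zvecs: "finite (Zvecs ns)" and card_Zvecs: "card (Zvecs ns) = prod_list ns"
proof -
  have "{x. 0 \<le> x \<and> x < int n} = {0..<int n}" for n by auto
  then show "finite (Zvecs ns)" "card (Zvecs ns) = prod_list ns"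
    using card_list_all2[of "\<lambda>x n. 0 \<le> x \<and> x < int n" ns] by (simp_all add: Zvecs_eq_list_all2)
qed

lemma box_iff_take_drop:
  "a \<in> box ns \<longleftrightarrow>
     length a = length ns \<and> take k a \<in> box (take k ns) \<and> drop k a \<in> box (drop k ns)"
proof
  assume "length a = length ns \<and> take k a \<in> box (take k ns) \<and> drop k a \<in> box (drop k ns)"
  then have "list_all2 (\<lambda>x n. 1 \<le> x \<and> x \<le> int n) (take k a @ drop k a) (take k ns @ drop k ns)"
    unfolding box_eq_list_all2 by (intro list_all2_appendI) auto
  then show "a \<in> box ns" unfolding box_eq_list_all2 by simp
qed (auto simp: box_eq_list_all2 list_all2_lengthD)

lemma Zvecs_take_drop:
  "h \<in> Zvecs ns \<Longrightarrow> take k h \<in> Zvecs (take k ns) \<and> drop k h \<in> Zvecs (drop k ns)"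
  by (simp add: Zvecs_eq_list_all2)

lemma replicate_0_in_Zvecs:
  assumes "\<forall>n\<in>set ns. n > 0"
  shows "replicate (length ns) 0 \<in> Zvecs ns"
  using assms by (auto simp: Zvecs_def)

lemma mod_diff_eq_0_iff:
  fixes x y N :: int
  assumes "1 \<le> x" "x \<le> N" "1 \<le> y" "y \<le> N"
  shows "(y - x) mod N = 0 \<longleftrightarrow> x = y"
proof
  assume "(y - x) mod N = 0"
  then have "N dvd y - x" by (simp add: mod_eq_0_iff_dvd)
  then show "x = y"
    using assms dvd_imp_le_int[of "y - x" N] by (cases "x = y") auto
qed simp

lemma mod_add_diff_eq_if_no_wrap:
  fixes N x y c :: int
  assumes "N > 0" and "(x - c) mod N + (y - x) mod N < N"
  shows "(y - c) mod N - (x - c) mod N = (y - x) mod N"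
proof -
  have "(y - c) mod N = ((x - c) mod N + (y - x) mod N) mod N"
    by (simp add: mod_add_eq)
  also have "\<dots> = (x - c) mod N + (y - x) mod N"
    using assms by simp
  finally show ?thesis by simp
qed

lemma common_window_offset_short:
  fixes N u v u' v' :: int
  assumes N: "N > 0" and eq: "(v - u) mod N = (v' - u') mod N" and short: "2 * ((v - u) mod N) < N"
  shows "\<exists>c. (v - c) mod N - (u - c) mod N = (v' - c) mod N - (u' - c) mod N"
proof -
  define d where "d = (v - u) mod N"
  define e where "e = (u' - u) mod N"
  have d: "0 \<le> d" "d < N" and e: "0 \<le> e" "e < N" using N by (simp_all add: d_def e_def)
  \<comment> \<open>\<open>(x - c) mod N\<close> is the offset of \<open>x\<close> in the window starting at \<open>c\<close>.  From \<open>c = u\<close> the pair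
    \<open>(u, v)\<close> does not wrap around; if \<open>(u', v')\<close> does, then from \<open>c = u'\<close> neither pair wraps,
    because \<open>2 d < N\<close>.\<close>
  show ?thesis
  proof (cases "e + d < N")
    case True
    then have "(v - u) mod N - (u - u) mod N = d" "(v' - u) mod N - (u' - u) mod N = d"
      using mod_add_diff_eq_if_no_wrap[OF N, of u u v] mod_add_diff_eq_if_no_wrap[OF N, of u' u v'] d eq
      by (simp_all add: d_def e_def)
    then show ?thesis by metis
  next
    case False
    then have "(u - u') mod N = N - e"
      using d zmod_zminus1_eq_if[of "u' - u" N] by (auto simp: e_def)
    then have "(v - u') mod N - (u - u') mod N = d" "(v' - u') mod N - (u' - u') mod N = d"
      using mod_add_diff_eq_if_no_wrap[OF N, of u u' v] mod_add_diff_eq_if_no_wrap[OF N, of u' u' v']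
        False short d e eq
      by (simp_all add: d_def)
    then show ?thesis by metis
  qed
qed

lemma common_window_offset:
  fixes N u v u' v' :: int
  assumes N: "N > 0" and eq: "(v - u) mod N = (v' - u') mod N" and not_half: "2 * ((v - u) mod N) \<noteq> N"
  shows "\<exists>c. (v - c) mod N - (u - c) mod N = (v' - c) mod N - (u' - c) mod N"
proof (cases "2 * ((v - u) mod N) < N")
  case True
  then show ?thesis using common_window_offset_short[OF N eq] by blast
next
  case False
  \<comment> \<open>Then the reversed pairs have toroidal difference \<open>N - (v - u) mod N < N / 2\<close>.\<close>
  then have long: "2 * ((v - u) mod N) > N" using not_half by linarith
  then have "(v - u) mod N \<noteq> 0" "(v' - u') mod N \<noteq> 0" using N eq by auto
  then have "(u - v) mod N = N - (v - u) mod N" "(u' - v') mod N = N - (v' - u') mod N"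
    using zmod_zminus1_eq_if[of "v - u" N] zmod_zminus1_eq_if[of "v' - u'" N] by simp_all
  then obtain c where "(u - c) mod N - (v - c) mod N = (u' - c) mod N - (v' - c) mod N"
    using common_window_offset_short[of N u v u' v'] N eq long by auto
  then show ?thesis by (metis minus_diff_eq)
qed

definition window_lift :: "nat list \<Rightarrow> int list \<Rightarrow> int list \<Rightarrow> int list" where
  "window_lift ns c x = map (\<lambda>i. c!i + (x!i - c!i) mod int (ns!i)) [0..<length ns]"

lemma window_lift_in_window_box:
  assumes "\<forall>n\<in>set ns. n > 0"
  shows "window_lift ns c x \<in> window_box ns c"
proof -
  have "0 \<le> (x!i - c!i) mod int (ns!i) \<and> (x!i - c!i) mod int (ns!i) < int (ns!i)"
    if "i < length ns" for i
    using assms that by simp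
  then show ?thesis by (auto simp: window_box_def window_lift_def)
qed

lemma reduce_window_lift:
  assumes "\<forall>n\<in>set ns. n > 0" and "x \<in> box ns"
  shows "map (\<lambda>(y, n). (y - 1) mod int n + 1) (zip (window_lift ns c x) ns) = x"
proof (rule nth_equalityI)
  fix i assume "i < length (map (\<lambda>(y, n). (y - 1) mod int n + 1) (zip (window_lift ns c x) ns))"
  then have i: "i < length ns" by (simp add: window_lift_def)
  have "(c!i + (x!i - c!i) mod int (ns!i) - 1) mod int (ns!i)
        = ((x!i - c!i) mod int (ns!i) + (c!i - 1)) mod int (ns!i)"
    by (simp add: algebra_simps)
  also have "\<dots> = (x!i - 1) mod int (ns!i)"
    by (simp add: mod_add_left_eq)
  also have "\<dots> = x!i - 1" using assms(2) i by (auto simp: box_def)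
  finally show "map (\<lambda>(y, n). (y - 1) mod int n + 1) (zip (window_lift ns c x) ns) ! i = x ! i"
    using i by (simp add: window_lift_def)
qed (use assms in \<open>simp add: window_lift_def box_def\<close>)

lemma per_ext_window_lift:
  assumes "\<forall>n\<in>set ns. n > 0" and "x \<in> box ns"
  shows "per_ext ns A (window_lift ns c x) = A x"
  unfolding per_ext_def reduce_window_lift[OF assms] ..

lemma inj_on_window_lift:
  assumes "\<forall>n\<in>set ns. n > 0"
  shows "inj_on (window_lift ns c) (box ns)"
  by (rule inj_on_inverseI[where g = "\<lambda>y. map (\<lambda>(y, n). (y - 1) mod int n + 1) (zip y ns)"])
     (rule reduce_window_lift[OF assms])

lemma diff_vec_window_lift:
  "diff_vec (window_lift ns c a) (window_lift ns c w) =
     map (\<lambda>i. (w!i - c!i) mod int (ns!i) - (a!i - c!i) mod int (ns!i)) [0..<length ns]"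
  by (rule nth_equalityI) (simp_all add: diff_vec_def window_lift_def)

lemma toroidal_vec_nth:
  assumes "length a = length ns" "length w = length ns" "i < length ns"
  shows "toroidal_vec ns a w ! i = (w!i - a!i) mod int (ns!i)"
  using assms by (simp add: toroidal_vec_def)

lemma length_toroidal_vec:
  assumes "length a = length ns" "length w = length ns"
  shows "length (toroidal_vec ns a w) = length ns"
  using assms by (simp add: toroidal_vec_def)

lemma repeated_diff_if_toroidal_vec_eq:
  assumes pos: "\<forall>n\<in>set ns. n > 0"
    and dots: "a \<in> dots ns A" "w \<in> dots ns A" "a' \<in> dots ns A" "w' \<in> dots ns A"
    and ne: "a \<noteq> w" "a' \<noteq> w'" "(a, w) \<noteq> (a', w')"
    and tv: "toroidal_vec ns a w = toroidal_vec ns a' w'"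
    and not_half: "\<not> has_half_coord ns (toroidal_vec ns a w)"
  shows "\<exists>c. length c = length ns \<and> window_has_repeated_diff ns A c"
proof -
  have box: "a \<in> box ns" "w \<in> box ns" "a' \<in> box ns" "w' \<in> box ns"
    using dots by (simp_all add: dots_def)
  then have len: "length a = length ns" "length w = length ns" "length a' = length ns" "length w' = length ns"
    by (simp_all add: box_def)
  define good where "good i ci \<longleftrightarrow> (w!i - ci) mod int (ns!i) - (a!i - ci) mod int (ns!i)
             = (w'!i - ci) mod int (ns!i) - (a'!i - ci) mod int (ns!i)" for i ci
  have "\<exists>ci. good i ci" if i: "i < length ns" for i
    unfolding good_def
  proof (rule common_window_offset)
    show "int (ns!i) > 0" using pos i by simp
    show "(w!i - a!i) mod int (ns!i) = (w'!i - a'!i) mod int (ns!i)"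
      using tv toroidal_vec_nth[OF len(1,2) i] toroidal_vec_nth[OF len(3,4) i] by simp
    show "2 * ((w!i - a!i) mod int (ns!i)) \<noteq> int (ns!i)"
      using not_half i toroidal_vec_nth[OF len(1,2) i]
      by (auto simp: has_half_coord_def length_toroidal_vec[OF len(1,2)])
  qed
  then obtain cf where cf: "\<And>i. i < length ns \<Longrightarrow> good i (cf i)"
    by metis
  define c where "c = map cf [0..<length ns]"
  let ?D = "{x \<in> window_box ns c. per_ext ns A x = 1}"
  have in_D: "window_lift ns c x \<in> ?D" if "x \<in> dots ns A" for x
    using that window_lift_in_window_box[OF pos] per_ext_window_lift[OF pos] by (simp add: dots_def)
  have "diff_vec (window_lift ns c a) (window_lift ns c w) = diff_vec (window_lift ns c a') (window_lift ns c w')"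
    using cf by (simp add: diff_vec_window_lift c_def good_def)
  moreover have "window_lift ns c a \<noteq> window_lift ns c w" "window_lift ns c a' \<noteq> window_lift ns c w'"
    "(window_lift ns c a, window_lift ns c w) \<noteq> (window_lift ns c a', window_lift ns c w')"
    using inj_on_window_lift[OF pos, of c] ne box by (auto dest: inj_onD)
  ultimately have "window_has_repeated_diff ns A c"
    unfolding window_has_repeated_diff_def Let_def using in_D dots by blast
  moreover have "length c = length ns" by (simp add: c_def)
  ultimately show ?thesis by blast
qed

lemma dots_eq_graph:
  assumes "is_perm_array_wrt ns k \<phi> A"
  shows "dots ns A = (\<lambda>x. x @ \<phi> x) ` box (take k ns)"
proof -
  have k: "k < length ns" and bij: "bij_betw \<phi> (box (take k ns)) (box (drop k ns))"
    and A: "\<And>a. a \<in> box ns \<Longrightarrow> A a = 1 \<longleftrightarrow> \<phi> (take k a) = drop k a"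
    using assms by (auto simp: is_perm_array_wrt_def)
  have "a \<in> dots ns A \<longleftrightarrow> (\<exists>x\<in>box (take k ns). a = x @ \<phi> x)" for a
  proof
    assume "a \<in> dots ns A"
    then show "\<exists>x\<in>box (take k ns). a = x @ \<phi> x"
      using A box_iff_take_drop[of a ns k] by (auto simp: dots_def intro!: bexI[of _ "take k a"])
  next
    assume "\<exists>x\<in>box (take k ns). a = x @ \<phi> x"
    then obtain x where x: "x \<in> box (take k ns)" and a: "a = x @ \<phi> x" by blast
    have "\<phi> x \<in> box (drop k ns)" using bij_betw_apply[OF bij x] .
    moreover have "length x = k" using x k by (simp add: box_def)
    ultimately show "a \<in> dots ns A"
      using x a A box_iff_take_drop[of a ns k] by (auto simp: dots_def box_def)
  qed
  then show ?thesis by blast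
qed

lemma card_dots:
  assumes "is_perm_array_wrt ns k \<phi> A"
  shows "card (dots ns A) = prod_list (take k ns)"
proof -
  have "inj_on (\<lambda>x. x @ \<phi> x) (box (take k ns))"
    by (rule inj_onI) (auto simp: box_def)
  then show ?thesis by (simp add: dots_eq_graph[OF assms] card_image card_box)
qed

lemma prod_list_drop_eq_take:
  assumes "is_perm_array_wrt ns k \<phi> A"
  shows "prod_list (drop k ns) = prod_list (take k ns)"
  using assms bij_betw_same_card by (fastforce simp: is_perm_array_wrt_def card_box)

lemma toroidal_vec_nth_eq_0_iff:
  assumes "a \<in> box ns" "w \<in> box ns" "i < length ns"
  shows "toroidal_vec ns a w ! i = 0 \<longleftrightarrow> a!i = w!i"
  using assms mod_diff_eq_0_iff[of "a!i" "int (ns!i)" "w!i"] by (simp add: box_def toroidal_vec_def)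

lemma toroidal_vec_in_Zvecs:
  assumes "\<forall>n\<in>set ns. n > 0" "length a = length ns" "length w = length ns"
  shows "toroidal_vec ns a w \<in> Zvecs ns"
  using assms by (simp add: Zvecs_def toroidal_vec_def)

lemma dots_differ_in_both_parts:
  assumes perm: "is_perm_array_wrt ns k \<phi> A"
    and dots: "a \<in> dots ns A" "w \<in> dots ns A" "a \<noteq> w"
  shows "\<exists>i<k. a!i \<noteq> w!i" and "\<exists>j. k \<le> j \<and> j < length ns \<and> a!j \<noteq> w!j"
proof -
  have k: "k < length ns" and inj: "inj_on \<phi> (box (take k ns))"
    and graph: "\<And>a. a \<in> box ns \<Longrightarrow> A a = 1 \<longleftrightarrow> \<phi> (take k a) = drop k a"
    using perm by (auto simp: is_perm_array_wrt_def bij_betw_def)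
  have box: "a \<in> box ns" "w \<in> box ns" and "A a = 1" "A w = 1" using dots by (auto simp: dots_def)
  then have phi: "\<phi> (take k a) = drop k a" "\<phi> (take k w) = drop k w" using graph by auto
  have len: "length a = length ns" "length w = length ns" using box by (auto simp: box_def)
  have "take k a \<noteq> take k w"
    using phi dots(3) by (metis append_take_drop_id)
  then show "\<exists>i<k. a!i \<noteq> w!i"
    using len k by (auto simp: list_eq_iff_nth_eq)
  have "drop k a \<noteq> drop k w"
    using phi inj box box_iff_take_drop \<open>take k a \<noteq> take k w\<close> by (metis inj_onD)
  then obtain j where "j < length ns - k" "drop k a ! j \<noteq> drop k w ! j"
    using len by (auto simp: list_eq_iff_nth_eq)
  then show "\<exists>j. k \<le> j \<and> j < length ns \<and> a!j \<noteq> w!j"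
    using len k by (intro exI[of _ "k + j"]) auto
qed

lemma toroidal_vec_dots_in_T_Lambda:
  assumes perm: "is_perm_array_wrt ns k \<phi> A" and pos: "\<forall>n\<in>set ns. n > 0"
    and dots: "a \<in> dots ns A" "w \<in> dots ns A" "a \<noteq> w"
  shows "toroidal_vec ns a w \<in> T_Lambda ns k"
proof -
  have box: "a \<in> box ns" "w \<in> box ns" using dots by (auto simp: dots_def)
  have k: "k < length ns" using perm by (simp add: is_perm_array_wrt_def)
  show ?thesis
    using dots_differ_in_both_parts[OF assms(1,3-5)] toroidal_vec_nth_eq_0_iff[OF box] k
      toroidal_vec_in_Zvecs[OF pos] box
    by (auto simp: T_Lambda_def box_def)
qed

lemma card_T_Lambda_le:
  assumes pos: "\<forall>n\<in>set ns. n > 0" and k: "k \<le> length ns"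
  shows "card (T_Lambda ns k) \<le> (prod_list (take k ns) - 1) * (prod_list (drop k ns) - 1)"
proof -
  define Z1 where "Z1 = Zvecs (take k ns) - {replicate k 0}"
  define Z2 where "Z2 = Zvecs (drop k ns) - {replicate (length ns - k) 0}"
  have "replicate k 0 \<in> Zvecs (take k ns)" "replicate (length ns - k) 0 \<in> Zvecs (drop k ns)"
    using replicate_0_in_Zvecs[of "take k ns"] replicate_0_in_Zvecs[of "drop k ns"] pos k
    by (auto dest: in_set_takeD in_set_dropD)
  then have card: "card Z1 = prod_list (take k ns) - 1" "card Z2 = prod_list (drop k ns) - 1"
    by (simp_all add: Z1_def Z2_def finite_Zvecs card_Zvecs)
  have "(\<lambda>h. (take k h, drop k h)) ` T_Lambda ns k \<subseteq> Z1 \<times> Z2"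
  proof (rule image_subsetI)
    fix h assume h: "h \<in> T_Lambda ns k"
    then have len: "length h = length ns" by (simp add: T_Lambda_def Zvecs_def)
    obtain j where j: "k \<le> j" "j < length ns" "h!j \<noteq> 0"
      using h by (auto simp: T_Lambda_def)
    have "drop k h ! (j - k) \<noteq> 0" using j len by simp
    moreover have "take k h \<noteq> replicate k 0"
      using h k len by (auto simp: T_Lambda_def list_eq_iff_nth_eq)
    ultimately show "(take k h, drop k h) \<in> Z1 \<times> Z2"
      using h j Zvecs_take_drop[of h ns k] by (auto simp: Z1_def Z2_def T_Lambda_def)
  qed
  moreover have "inj_on (\<lambda>h. (take k h, drop k h)) (T_Lambda ns k)"
    by (rule inj_onI) (metis append_take_drop_id prod.inject)
  ultimately have "card (T_Lambda ns k) \<le> card (Z1 \<times> Z2)"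
    by (intro card_inj_on_le) (simp_all add: Z1_def Z2_def finite_Zvecs)
  then show ?thesis by (simp add: card card_cartesian_product)
qed

definition off_diag :: "'a set \<Rightarrow> ('a \<times> 'a) set" where
  "off_diag D = {(a, w). a \<in> D \<and> w \<in> D \<and> a \<noteq> w}"

lemma finite_off_diag: "finite D \<Longrightarrow> finite (off_diag D)"
  by (rule finite_subset[of _ "D \<times> D"]) (auto simp: off_diag_def)

lemma card_off_diag:
  assumes "finite D"
  shows "card (off_diag D) = card D * (card D - 1)"
proof -
  have "off_diag D = D \<times> D - (\<lambda>x. (x, x)) ` D" by (auto simp: off_diag_def)
  moreover have "card ((\<lambda>x. (x, x)) ` D) = card D" by (simp add: card_image inj_on_def)
  ultimately show ?thesis
    using assms by (simp add: card_Diff_subset card_cartesian_product image_subset_iff diff_mult_distrib2)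
qed

lemma card_off_diag_dots:
  assumes "is_perm_array_wrt ns k \<phi> A"
  shows "card (off_diag (dots ns A)) = prod_list (take k ns) * (prod_list (take k ns) - 1)"
  using card_off_diag[of "dots ns A"] card_dots[OF assms] finite_box by (simp add: dots_def)

definition non_half_pairs :: "nat list \<Rightarrow> (int list \<Rightarrow> nat) \<Rightarrow> (int list \<times> int list) set" where
  "non_half_pairs ns A = {(a, w) \<in> off_diag (dots ns A). \<not> has_half_coord ns (toroidal_vec ns a w)}"

lemma card_off_diag_dots_split:
  "card (off_diag (dots ns A)) = size (H_A ns A) + card (non_half_pairs ns A)"
proof -
  let ?half = "{(a, w) \<in> off_diag (dots ns A). has_half_coord ns (toroidal_vec ns a w)}"
  have "?half = {(a, w). a \<in> dots ns A \<and> w \<in> dots ns A \<and> a \<noteq> w \<and> has_half_coord ns (toroidal_vec ns a w)}"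
    by (auto simp: off_diag_def)
  then have "size (H_A ns A) = card ?half"
    by (simp add: H_A_def)
  moreover have "finite (off_diag (dots ns A))"
    using finite_box by (simp add: dots_def finite_off_diag)
  then have "card (off_diag (dots ns A)) = card ?half + card (non_half_pairs ns A)"
    unfolding non_half_pairs_def
    by (subst card_Un_disjoint[symmetric]) (auto intro: arg_cong[where f = card] finite_subset)
  ultimately show ?thesis by simp
qed

lemma inj_on_toroidal_vec_non_half_pairs:
  assumes pos: "\<forall>n\<in>set ns. n > 0"
    and no_repeat: "\<forall>c. length c = length ns \<longrightarrow> \<not> window_has_repeated_diff ns A c"
  shows "inj_on (\<lambda>(a, w). toroidal_vec ns a w) (non_half_pairs ns A)"
proof (rule inj_onI)
  fix p p'
  assume p: "p \<in> non_half_pairs ns A" "p' \<in> non_half_pairs ns A"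
    and eq: "(\<lambda>(a, w). toroidal_vec ns a w) p = (\<lambda>(a, w). toroidal_vec ns a w) p'"
  obtain a w a' w' where aw: "p = (a, w)" "p' = (a', w')" by fastforce
  show "p = p'"
  proof (rule ccontr)
    assume "p \<noteq> p'"
    then show False
      using p eq repeated_diff_if_toroidal_vec_eq[OF pos, of a A w a' w'] no_repeat
      unfolding aw by (simp add: non_half_pairs_def off_diag_def) blast
  qed
qed

lemma card_non_half_pairs_le:
  assumes perm: "is_perm_array_wrt ns k \<phi> A" and pos: "\<forall>n\<in>set ns. n > 0"
    and no_repeat: "\<forall>c. length c = length ns \<longrightarrow> \<not> window_has_repeated_diff ns A c"
  shows "card (non_half_pairs ns A) + card (H_Lambda ns k) \<le> card (T_Lambda ns k)"
proof -
  have fin: "finite (T_Lambda ns k)"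
    using finite_Zvecs by (auto simp: T_Lambda_def)
  have sub: "H_Lambda ns k \<subseteq> T_Lambda ns k"
    by (auto simp: H_Lambda_def)
  have "(\<lambda>(a, w). toroidal_vec ns a w) ` non_half_pairs ns A \<subseteq> T_Lambda ns k - H_Lambda ns k"
    using toroidal_vec_dots_in_T_Lambda[OF perm pos]
    by (auto simp: non_half_pairs_def off_diag_def H_Lambda_def)
  then have "card (non_half_pairs ns A) \<le> card (T_Lambda ns k - H_Lambda ns k)"
    using card_inj_on_le[OF inj_on_toroidal_vec_non_half_pairs[OF pos no_repeat]] fin by blast
  also have "\<dots> = card (T_Lambda ns k) - card (H_Lambda ns k)"
    using card_Diff_subset[OF finite_subset[OF sub fin] sub] .
  finally show ?thesis
    using card_mono[OF fin sub] by linarith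
qed

theorem mainTheorem6:
  fixes ns :: "nat list" and k :: nat and \<phi> :: "int list \<Rightarrow> int list"
    and A :: "int list \<Rightarrow> nat" and n :: nat
  assumes "length ns \<ge> 2"
    and "\<forall>i<length ns. ns!i \<ge> 2"
    and "is_perm_array_wrt ns k \<phi> A"
    and "n = prod_list (take k ns)"
    and "int (size (H_A ns A)) - int (card (H_Lambda ns k)) < int n - 1"
  shows "\<exists>c. length c = length ns \<and> window_has_repeated_diff ns A c"
proof (rule ccontr)
  assume "\<not> ?thesis"
  then have no_repeat: "\<forall>c. length c = length ns \<longrightarrow> \<not> window_has_repeated_diff ns A c" by blast
  have pos: "\<forall>n\<in>set ns. n > 0" using assms(2) by (fastforce simp: in_set_conv_nth)
  have "size (H_A ns A) + card (non_half_pairs ns A) = n * (n - 1)"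
    using card_off_diag_dots_split card_off_diag_dots[OF assms(3)] assms(4) by simp
  moreover have "card (non_half_pairs ns A) + card (H_Lambda ns k) \<le> card (T_Lambda ns k)"
    using card_non_half_pairs_le[OF assms(3) pos no_repeat] .
  moreover have "card (T_Lambda ns k) \<le> (n - 1) * (n - 1)"
    using card_T_Lambda_le[OF pos, of k] prod_list_drop_eq_take[OF assms(3)] assms(3,4)
    by (simp add: is_perm_array_wrt_def)
  moreover have "n * (n - 1) = (n - 1) * (n - 1) + (n - 1)"
    by (cases n) simp_all
  ultimately show False
    using assms(5) by linarith
qed

end
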